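(* Let $\phi:Z\to[-\infty,+\infty]$ be proper and closed and suppose Assumptions (A1) and (A2) hold for some $\lambda\in\mathbb R$. Then for every $z\in Z$ and $\tau\in(0,1/\lambda^-)$, $|\partial\phi|(J_\tau z)\le\frac{\mathsf d_Z(J_\tau z,z)}{\tau}\le\frac1{1+\lambda\tau}|\partial\phi|(z)$. In particular $J_\tau z\in D(|\partial\phi|)$.
   Context: $(X,\mathsf d_X)$, $(Y,\mathsf d_Y)$ complete metric spaces; $Z=X\times Y$ with $\mathsf d_Z=(\mathsf d_X^2+\mathsf d_Y^2)^{1/2}$. $D_X\phi=\{x:\phi(x,y)<+\infty\ \forall y\}$, $D_Y\phi=\{y:\phi(x,y)>-\infty\ \forall x\}$, $D\phi=D_X\phi\times D_Y\phi$; proper: $D\phi\ne\emptyset$; closed: for $x\in D_X\phi$, $y\mapsto\phi(x,y)$ upper semicontinuous, for $y\in D_Y\phi$, $x\mapsto\phi(x,y)$ lower semicontinuous. (A1): $\phi=+\infty$ on $(X\setminus D_X\phi)\times D_Y\phi$, $\phi=-\infty$ on $D_X\phi\times(Y\setminus D_Y\phi)$. $\lambda^-=\max\{-\lambda,0\}$, $1/\lambda^-:=+\infty$ if $\lambda^-=0$. $\Phi_\tau(x,y;x',y')=\phi(x',y')+\frac1{2\tau}(\mathsf d_X^2(x',x)-\mathsf d_Y^2(y',y))$. $f$ on $Z$ is $\mu$-convex-concave along curves $\gamma,\sigma$ if for all $t\in[0,1]$: $f(\gamma_t,y)\le(1-t)f(\gamma_0,y)+tf(\gamma_1,y)-\frac\mu2t(1-t)\mathsf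 d_X^2(\gamma_0,\gamma_1)$ for all $y$ and $f(x,\sigma_t)\ge(1-t)f(x,\sigma_0)+tf(x,\sigma_1)+\frac\mu2t(1-t)\mathsf d_Y^2(\sigma_0,\sigma_1)$ for all $x$. (A2) for $\lambda$: for every $(x,y)\in Z$, $(x_0,y_0),(x_1,y_1)\in D\phi$ there are continuous curves $\gamma$ from $x_0$ to $x_1$, $\sigma$ from $y_0$ to $y_1$ such that for all $\tau\in(0,1/\lambda^-)$, $(x',y')\mapsto\Phi_\tau(x,y;x',y')$ is $(\tau^{-1}+\lambda)$-convex-concave along them. $J_\tau z$ is the (unique, existing under these assumptions) saddle point of $z'\mapsto\Phi_\tau(z;z')$. Slope: for $z=(x,y)\in D\phi$ not isolated, $|\partial\phi|(z)=\limsup_{D\phi\ni z'=(x',y')\to z}\frac{\max\{\phi(x,y')-\phi(x',y),0\}}{\mathsf d_Z(z',z)}$; $0$ at isolated points of $D\phi$; $+\infty$ off $D\phi$. $D(|\partial\phi|)=\{z\in D\phi:|\partial\phi|(z)<+\infty\}$. *)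

theory Defs
  imports "HOL-Analysis.Analysis" "HOL-Library.Extended_Real"
begin

text \<open>The product metric on 'x \<times> 'y in HOL-Analysis is
  dist (x,y) (x',y') = sqrt ((dist x x')^2 + (dist y y')^2), i.e. d_Z.
  Functionals are curried: phi x y.\<close>

definition DX :: "('x \<Rightarrow> 'y \<Rightarrow> ereal) \<Rightarrow> 'x set" where
  "DX phi = {x. \<forall>y. phi x y < \<infinity>}"

definition DY :: "('x \<Rightarrow> 'y \<Rightarrow> ereal) \<Rightarrow> 'y set" where
  "DY phi = {y. \<forall>x. phi x y > -\<infinity>}"

definition Dom :: "('x \<Rightarrow> 'y \<Rightarrow> ereal) \<Rightarrow> ('x \<times> 'y) set" where
  "Dom phi = DX phi \<times> DY phi"

definition proper_fun :: "('x \<Rightarrow> 'y \<Rightarrow> ereal) \<Rightarrow> bool" where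
  "proper_fun phi \<longleftrightarrow> Dom phi \<noteq> {}"

definition lsc :: "('a::topological_space \<Rightarrow> ereal) \<Rightarrow> bool" where
  "lsc f \<longleftrightarrow> (\<forall>c. open {x. c < f x})"

definition usc :: "('a::topological_space \<Rightarrow> ereal) \<Rightarrow> bool" where
  "usc f \<longleftrightarrow> (\<forall>c. open {x. f x < c})"

definition closed_fun :: "('x::topological_space \<Rightarrow> 'y::topological_space \<Rightarrow> ereal) \<Rightarrow> bool" where
  "closed_fun phi \<longleftrightarrow> (\<forall>x\<in>DX phi. usc (\<lambda>y. phi x y)) \<and> (\<forall>y\<in>DY phi. lsc (\<lambda>x. phi x y))"

definition A1 :: "('x \<Rightarrow> 'y \<Rightarrow> ereal) \<Rightarrow> bool" where
  "A1 phi \<longleftrightarrow> (\<forall>x y. x \<notin> DX phi \<and> y \<in> DY phi \<longrightarrow> phi x y = \<infinity>) \<and>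
                (\<forall>x y. x \<in> DX phi \<and> y \<notin> DY phi \<longrightarrow> phi x y = -\<infinity>)"

definition neg_part :: "real \<Rightarrow> real" where
  "neg_part lam = max (- lam) 0"

text \<open>tau \<in> (0, 1/lam^-), with 1/lam^- = +\<infinity> when lam^- = 0.\<close>
definition admissible_tau :: "real \<Rightarrow> real \<Rightarrow> bool" where
  "admissible_tau lam tau \<longleftrightarrow> 0 < tau \<and> (neg_part lam = 0 \<or> tau < 1 / neg_part lam)"

definition Phi :: "('x::metric_space \<Rightarrow> 'y::metric_space \<Rightarrow> ereal) \<Rightarrow> real \<Rightarrow> 'x \<Rightarrow> 'y \<Rightarrow> 'x \<Rightarrow> 'y \<Rightarrow> ereal" where
  "Phi phi tau x y x' y' = phi x' y' + ereal ((dist x' x ^ 2 - dist y' y ^ 2) / (2 * tau))"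

definition convex_concave_along ::
  "('x::metric_space \<Rightarrow> 'y::metric_space \<Rightarrow> ereal) \<Rightarrow> real \<Rightarrow> (real \<Rightarrow> 'x) \<Rightarrow> (real \<Rightarrow> 'y) \<Rightarrow> bool" where
  "convex_concave_along f mu \<gamma> \<sigma> \<longleftrightarrow>
     (\<forall>t\<in>{0..1}.
        (\<forall>y. f (\<gamma> t) y \<le> ereal (1 - t) * f (\<gamma> 0) y + ereal t * f (\<gamma> 1) y
                     - ereal (mu / 2 * t * (1 - t) * (dist (\<gamma> 0) (\<gamma> 1))^2)) \<and>
        (\<forall>x. f x (\<sigma> t) \<ge> ereal (1 - t) * f x (\<sigma> 0) + ereal t * f x (\<sigma> 1)
                     + ereal (mu / 2 * t * (1 - t) * (dist (\<sigma> 0) (\<sigma> 1))^2)))"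

definition A2 :: "('x::metric_space \<Rightarrow> 'y::metric_space \<Rightarrow> ereal) \<Rightarrow> real \<Rightarrow> bool" where
  "A2 phi lam \<longleftrightarrow>
     (\<forall>x y x0 y0 x1 y1. (x0, y0) \<in> Dom phi \<longrightarrow> (x1, y1) \<in> Dom phi \<longrightarrow>
        (\<exists>\<gamma> \<sigma>. continuous_on {0..1} \<gamma> \<and> \<gamma> 0 = x0 \<and> \<gamma> 1 = x1 \<and>
                continuous_on {0..1} \<sigma> \<and> \<sigma> 0 = y0 \<and> \<sigma> 1 = y1 \<and>
                (\<forall>tau. admissible_tau lam tau \<longrightarrow>
                   convex_concave_along (Phi phi tau x y) (1 / tau + lam) \<gamma> \<sigma>)))"

definition saddle_point :: "('x \<Rightarrow> 'y \<Rightarrow> ereal) \<Rightarrow> 'x \<times> 'y \<Rightarrow> bool" where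
  "saddle_point f p \<longleftrightarrow> (\<forall>x y. f (fst p) y \<le> f (fst p) (snd p) \<and> f (fst p) (snd p) \<le> f x (snd p))"

definition J :: "('x::metric_space \<Rightarrow> 'y::metric_space \<Rightarrow> ereal) \<Rightarrow> real \<Rightarrow> 'x \<times> 'y \<Rightarrow> 'x \<times> 'y" where
  "J phi tau z = (THE p. saddle_point (Phi phi tau (fst z) (snd z)) p)"

definition slope :: "('x::metric_space \<Rightarrow> 'y::metric_space \<Rightarrow> ereal) \<Rightarrow> 'x \<times> 'y \<Rightarrow> ereal" where
  "slope phi z =
     (if z \<notin> Dom phi then \<infinity>
      else if \<not> z islimpt Dom phi then 0
      else Limsup (at z within Dom phi)
             (\<lambda>z'. max (phi (fst z) (snd z') - phi (fst z') (snd z)) 0 / ereal (dist z' z)))"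

definition dom_slope :: "('x::metric_space \<Rightarrow> 'y::metric_space \<Rightarrow> ereal) \<Rightarrow> ('x \<times> 'y) set" where
  "dom_slope phi = {z \<in> Dom phi. slope phi z < \<infinity>}"

end

theory Submission
  imports Defs
begin

text \<open>On \<open>D \<phi>\<close> the functional \<open>\<Phi>\<^sub>\<tau>(z; \<cdot>)\<close> is a real function \<open>F\<close>
  which, by (A2), is \<open>(1/\<tau> + \<lambda>)\<close>-strongly convex in \<open>x\<close> and concave in \<open>y\<close> along curves;
  since (A2) also holds for every smaller step size, letting it tend to \<open>0\<close> shows that the
  curves leave their starting point at most linearly in the parameter. Minimizing sequences of
  strongly convex functions are Cauchy, so completeness yields minimizers \<open>X y\<close> of \<open>F(\<cdot>, y)\<close>
  and a maximizer \<open>ys\<close> of the concave function \<open>y \<mapsto> F(X y, y)\<close>; perturbing \<open>ys\<close> along the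
  curves shows that \<open>(X ys, ys)\<close> is the saddle point \<open>J\<^sub>\<tau> z\<close>.

  For \<open>J\<^sub>\<tau> z = (a, b)\<close> the saddle inequalities \<open>F(a, y') \<le> F(a, b) \<le> F(x', b)\<close> and the
  triangle inequality bound \<open>\<phi>(a, y') - \<phi>(x', b)\<close> by \<open>d(z', J\<^sub>\<tau> z) (d(J\<^sub>\<tau> z, z) + d(z', J\<^sub>\<tau> z)/2)/\<tau>\<close>,
  giving the first inequality. Conversely, strong convexity-concavity makes the value gap
  \<open>F(xb, b) - F(a, yb)\<close> at least \<open>(1/\<tau> + \<lambda>) d\<^sup>2/2\<close> with \<open>d = d(J\<^sub>\<tau> z, z)\<close>, and moving from \<open>z\<close> a
  fraction \<open>k\<close> of the way towards \<open>J\<^sub>\<tau> z\<close> along the curves of (A2) therefore increases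
  \<open>\<phi>(xb, \<cdot>) - \<phi>(\<cdot>, yb)\<close> by about \<open>(1/\<tau> + \<lambda>) k d\<^sup>2\<close> over a distance at most \<open>k d\<close>. Hence
  \<open>|\<partial>\<phi>|(z) \<ge> (1/\<tau> + \<lambda>) d\<close>, which is the second inequality.\<close>

lemma le_of_le_add_small_mult:
  fixes a c K :: real
  assumes "\<And>e. e > 0 \<Longrightarrow> \<exists>t>0. t < e \<and> a \<le> c + t * K"
  shows "a \<le> c"
proof (rule ccontr)
  assume "\<not> a \<le> c"
  define e where "e = (a - c) / (\<bar>K\<bar> + 1)"
  have e: "e > 0" using \<open>\<not> a \<le> c\<close> by (simp add: e_def)
  then obtain t where t: "t > 0" "t < e" "a \<le> c + t * K" using assms by blast
  have "t * K \<le> t * \<bar>K\<bar>" using t by (simp add: mult_left_mono)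
  also have "\<dots> \<le> e * \<bar>K\<bar>" using t by (simp add: mult_right_mono)
  also have "\<dots> < e * (\<bar>K\<bar> + 1)" using e by simp
  also have "\<dots> = a - c" by (simp add: e_def)
  finally show False using t by linarith
qed

lemma quadratic_ge_vertex:
  fixes a b c u :: real
  assumes "a > 0"
  shows "c - b^2 / (4*a) \<le> a * u^2 + b * u + c"
proof -
  have "a * u^2 + b * u + c - (c - b^2 / (4*a)) = a * (u + b / (2*a))^2"
    using assms by (simp add: field_simps power2_eq_square)
  moreover have "a * (u + b / (2*a))^2 \<ge> 0" using assms by simp
  ultimately show ?thesis by linarith
qed

lemma dist_Pair_le_scaled:
  fixes x x0 x1 :: "'a::metric_space" and y y0 y1 :: "'b::metric_space"
  assumes "dist x x0 \<le> k * dist x0 x1" "dist y y0 \<le> k * dist y0 y1" "0 \<le> k"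
  shows "dist (x, y) (x0, y0) \<le> k * dist (x0, y0) (x1, y1)"
proof -
  have "(dist x x0)^2 + (dist y y0)^2 \<le> (k * dist x0 x1)^2 + (k * dist y0 y1)^2"
    using assms by (intro add_mono power_mono) auto
  also have "\<dots> = (k * dist (x0, y0) (x1, y1))^2" by (simp add: dist_Pair_Pair power_mult_distrib algebra_simps)
  finally have "sqrt ((dist x x0)^2 + (dist y y0)^2) \<le> sqrt ((k * dist (x0, y0) (x1, y1))^2)"
    by (rule real_sqrt_le_mono)
  then show ?thesis using assms(3) by (simp add: dist_Pair_Pair[of x y])
qed

text \<open>The hypothesis is the convexity inequality of (A2) for the step size \<open>q\<close>, centred at the
  starting point of a curve; multiplied by \<open>2q\<close> it reads \<open>a \<le> (tD)\<^sup>2 + O(q)\<close>.\<close>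

lemma le_sq_of_le_for_small_steps:
  fixes a p p_start p_end D t lam :: real
  assumes small: "\<And>e. e > 0 \<Longrightarrow> \<exists>q\<in>Q. 0 < q \<and> q < e"
    and ineq: "\<And>q. q \<in> Q \<Longrightarrow>
      p + a / (2*q) \<le> (1-t) * p_start + t * (p_end + D^2 / (2*q)) - (1/q + lam) / 2 * t * (1-t) * D^2"
  shows "a \<le> (t * D)^2"
proof (rule le_of_le_add_small_mult)
  fix e :: real assume "e > 0"
  then obtain q where "q \<in> Q" and q: "q > 0" "q < e" using small by blast
  have "2*q * (p + a / (2*q))
      \<le> 2*q * ((1-t) * p_start + t * (p_end + D^2 / (2*q)) - (1/q + lam) / 2 * t * (1-t) * D^2)"
    using ineq[OF \<open>q \<in> Q\<close>] q by (intro mult_left_mono) auto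
  moreover have "2*q * (p + a / (2*q)) = 2*q*p + a" using q by (simp add: field_simps)
  moreover have "2*q * ((1-t) * p_start + t * (p_end + D^2 / (2*q)) - (1/q + lam) / 2 * t * (1-t) * D^2)
      = (t * D)^2 + q * (2 * ((1-t) * p_start + t * p_end - p) - lam * t * (1-t) * D^2) + 2*q*p"
    using q by (simp add: field_simps power2_eq_square)
  ultimately have "a \<le> (t * D)^2 + q * (2 * ((1-t) * p_start + t * p_end - p) - lam * t * (1-t) * D^2)"
    by linarith
  with q show "\<exists>q>0. q < e \<and> a \<le> (t * D)^2 + q * (2 * ((1-t) * p_start + t * p_end - p) - lam * t * (1-t) * D^2)"
    by blast
qed

section \<open>Strong convexity along curves and a minimax theorem\<close>

text \<open>Strong convexity along curves, recording of each curve only its point \<open>w\<close> at parameter \<open>t\<close>.\<close>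

definition strongly_convex_interp_on :: "real \<Rightarrow> 'a::metric_space set \<Rightarrow> ('a \<Rightarrow> real) \<Rightarrow> bool" where
  "strongly_convex_interp_on mu S G \<longleftrightarrow>
     (\<forall>x0\<in>S. \<forall>x1\<in>S. \<forall>t\<in>{0..1}. \<exists>w\<in>S.
        G w \<le> (1-t) * G x0 + t * G x1 - mu/2 * t * (1-t) * (dist x0 x1)^2)"

text \<open>Lower semicontinuity of the extension of \<open>G\<close> by \<open>+\<infinity>\<close> outside \<open>S\<close>.\<close>

definition lsc_extended :: "'a::metric_space set \<Rightarrow> ('a \<Rightarrow> real) \<Rightarrow> bool" where
  "lsc_extended S G \<longleftrightarrow>
     (\<forall>x0 c. (x0 \<in> S \<longrightarrow> c < G x0) \<longrightarrow> (\<exists>r>0. \<forall>x\<in>S. dist x x0 < r \<longrightarrow> c < G x))"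

definition saddle_on :: "'a set \<Rightarrow> 'b set \<Rightarrow> ('a \<Rightarrow> 'b \<Rightarrow> real) \<Rightarrow> 'a \<times> 'b \<Rightarrow> bool" where
  "saddle_on S T F p \<longleftrightarrow> fst p \<in> S \<and> snd p \<in> T \<and>
     (\<forall>x\<in>S. F (fst p) (snd p) \<le> F x (snd p)) \<and> (\<forall>y\<in>T. F (fst p) y \<le> F (fst p) (snd p))"

lemma lsc_extended_add_continuous:
  fixes f :: "'a::metric_space \<Rightarrow> ereal"
  assumes lsc: "lsc f" and fin: "\<And>x. x \<in> S \<Longrightarrow> f x = ereal (g x)"
    and out: "\<And>x. x \<notin> S \<Longrightarrow> f x = \<infinity>" and cont: "\<And>x. isCont h x"
  shows "lsc_extended S (\<lambda>x. g x + h x)"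
  unfolding lsc_extended_def
proof (intro allI impI)
  fix x0 c assume below: "x0 \<in> S \<longrightarrow> c < g x0 + h x0"
  obtain c' d where d: "d > 0" "ereal c' < f x0" "c \<le> c' + h x0 - d"
  proof (cases "x0 \<in> S")
    case True
    define d where "d = (g x0 + h x0 - c) / 2"
    show ?thesis using that[of d "g x0 - d"] True below fin by (simp add: d_def)
  next
    case False
    show ?thesis using that[of 1 "c - h x0 + 1"] False out by simp
  qed
  have "open {x. ereal c' < f x}" using lsc by (simp add: lsc_def)
  then obtain r1 where r1: "r1 > 0" "\<And>x. dist x x0 < r1 \<Longrightarrow> ereal c' < f x"
    using d(2) by (metis dist_commute mem_Collect_eq open_dist)
  obtain r2 where r2: "r2 > 0" "\<And>x. dist x x0 < r2 \<Longrightarrow> dist (h x) (h x0) < d"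
    using cont[of x0] d(1) unfolding continuous_at_eps_delta by blast
  have "c < g x + h x" if "x \<in> S" "dist x x0 < min r1 r2" for x
  proof -
    have "c' < g x" using r1(2)[of x] fin[OF that(1)] that(2) by simp
    moreover have "h x0 - d < h x" using r2(2)[of x] that(2) by (simp add: dist_real_def)
    ultimately show ?thesis using d(3) by linarith
  qed
  then show "\<exists>r>0. \<forall>x\<in>S. dist x x0 < r \<longrightarrow> c < g x + h x"
    using r1(1) r2(1) by (intro exI[of _ "min r1 r2"]) auto
qed

lemma strongly_convex_interp_quadratic_growth:
  fixes G :: "'a::metric_space \<Rightarrow> real"
  assumes conv: "strongly_convex_interp_on mu S G"
    and m: "m \<in> S" "\<forall>x\<in>S. G m \<le> G x" and x: "x \<in> S"
  shows "G m + mu/2 * (dist m x)^2 \<le> G x"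
proof (rule le_of_le_add_small_mult)
  fix e :: real assume e: "e > 0"
  define t where "t = min (e/2) 1"
  have t: "0 < t" "t < e" "t \<le> 1" using e by (auto simp: t_def)
  then obtain w where "w \<in> S" and w: "G w \<le> (1-t) * G m + t * G x - mu/2 * t * (1-t) * (dist m x)^2"
    using conv m x unfolding strongly_convex_interp_on_def by fastforce
  then have "G m \<le> G w" using m by blast
  with w have "t * (G m + mu/2 * (dist m x)^2) \<le> t * (G x + t * (mu/2 * (dist m x)^2))"
    by (simp add: field_simps)
  then have "G m + mu/2 * (dist m x)^2 \<le> G x + t * (mu/2 * (dist m x)^2)" using t by simp
  with t show "\<exists>t>0. t < e \<and> G m + mu/2 * (dist m x)^2 \<le> G x + t * (mu/2 * (dist m x)^2)"
    by blast
qed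

lemma strongly_convex_from_point_coercive:
  fixes G :: "'a::metric_space \<Rightarrow> real"
  assumes mu: "mu > 0" and x0: "x0 \<in> S" and r: "r > 0"
    and near: "\<forall>x\<in>S. dist x x0 < r \<longrightarrow> G x0 - 1 < G x"
    and along: "\<forall>x1\<in>S. \<forall>t\<in>{0..1}. \<exists>w\<in>S. dist w x0 \<le> t * dist x0 x1 \<and>
                  G w \<le> (1-t) * G x0 + t * G x1 - mu/2 * t * (1-t) * (dist x0 x1)^2"
    and x: "x \<in> S"
  shows "G x0 - 2 - 2 * dist x0 x / r + mu/4 * (dist x0 x)^2 \<le> G x"
proof (cases "x = x0")
  case True
  then show ?thesis by simp
next
  case False
  define D where "D = dist x0 x"
  have D: "D > 0" using False by (simp add: D_def)
  define t where "t = min (1/2) (r / (2*D))"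
  have t: "0 < t" "t \<le> 1/2" "t * D \<le> r/2" using D r by (auto simp: t_def min_def field_simps)
  obtain w where "w \<in> S" "dist w x0 \<le> t * D"
    and w: "G w \<le> (1-t) * G x0 + t * G x - mu/2 * t * (1-t) * D^2"
    using along x t unfolding D_def by fastforce
  with near r t have "G x0 - 1 < G w" by force
  moreover have "(1-t) * G x0 = G x0 - t * G x0" by (simp add: algebra_simps)
  ultimately have "t * G x0 - 1 + mu/2 * t * (1-t) * D^2 < t * G x" using w by linarith
  moreover have "t * (G x0 - 1/t + mu/2 * (1-t) * D^2) = t * G x0 - 1 + mu/2 * t * (1-t) * D^2"
    using t by (simp add: field_simps)
  ultimately have "t * (G x0 - 1/t + mu/2 * (1-t) * D^2) < t * G x" by linarith
  then have "G x0 - 1/t + mu/2 * (1-t) * D^2 < G x" using t by simp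
  moreover have "1/t \<le> 2 + 2 * D / r"
  proof (cases "1/2 \<le> r / (2*D)")
    case True
    then show ?thesis using D r by (simp add: t_def)
  next
    case False
    then show ?thesis by (simp add: t_def)
  qed
  moreover have "mu/4 * D^2 \<le> mu/2 * (1-t) * D^2"
    using t mu by (intro mult_right_mono) auto
  ultimately show ?thesis unfolding D_def by linarith
qed

text \<open>Moving the centre of the quadratic term \<open>d(\<cdot>, x0)\<^sup>2/(2\<tau>)\<close> of a coercive function to
  another point changes it only by a term of linear growth.\<close>

lemma strongly_convex_from_point_recentred_bdd_below:
  fixes G :: "'a::metric_space \<Rightarrow> real"
  assumes mu: "mu > 0" and x0: "x0 \<in> S" and r: "r > 0" and tau: "tau > 0"
    and near: "\<forall>x\<in>S. dist x x0 < r \<longrightarrow> G x0 - 1 < G x"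
    and along: "\<forall>x1\<in>S. \<forall>t\<in>{0..1}. \<exists>w\<in>S. dist w x0 \<le> t * dist x0 x1 \<and>
                  G w \<le> (1-t) * G x0 + t * G x1 - mu/2 * t * (1-t) * (dist x0 x1)^2"
  obtains B where "\<And>x. x \<in> S \<Longrightarrow> B \<le> G x + ((dist x xb)^2 - (dist x x0)^2) / (2*tau)"
proof
  fix x assume x: "x \<in> S"
  define D where "D = dist x0 x"
  define e where "e = dist x0 xb"
  have "D \<le> e + dist x xb" unfolding D_def e_def by (rule dist_triangle2)
  moreover have "e \<le> D + dist x xb"
    unfolding D_def e_def using dist_triangle2[of x0 xb x] by (simp add: dist_commute)
  ultimately have "\<bar>D - e\<bar> \<le> dist x xb" by linarith
  then have "(D - e)^2 \<le> (dist x xb)^2"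
    by (metis abs_ge_zero power2_abs power_mono)
  moreover have "(D - e)^2 = D^2 + e^2 - 2 * D * e" by (simp add: power2_diff)
  moreover have "(dist x x0)^2 = D^2" by (simp add: D_def dist_commute)
  ultimately have "- 2 * D * e \<le> (dist x xb)^2 - (dist x x0)^2"
    using zero_le_power2[of e] by linarith
  then have "(- 2 * D * e) / (2*tau) \<le> ((dist x xb)^2 - (dist x x0)^2) / (2*tau)"
    using tau by (intro divide_right_mono) auto
  moreover have "(- 2 * D * e) / (2*tau) = - (e/tau) * D" using tau by simp
  moreover have "G x0 - 2 - 2 * D / r + mu/4 * D^2 \<le> G x"
    unfolding D_def by (rule strongly_convex_from_point_coercive[OF mu x0 r near along x])
  moreover have "G x0 - 2 - (- (2/r + e/tau))^2 / (4 * (mu/4))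
      \<le> mu/4 * D^2 + (- (2/r + e/tau)) * D + (G x0 - 2)"
    using mu by (intro quadratic_ge_vertex) auto
  moreover have "(- (2/r + e/tau))^2 / (4 * (mu/4)) = (2/r + e/tau)^2 / mu"
    by (simp only: power2_minus)
  moreover have "mu/4 * D^2 + (- (2/r + e/tau)) * D + (G x0 - 2)
      = G x0 - 2 - 2 * D / r + mu/4 * D^2 - (e/tau) * D" by (simp add: algebra_simps)
  ultimately show "G x0 - 2 - (2/r + e/tau)^2 / mu
      \<le> G x + ((dist x xb)^2 - (dist x x0)^2) / (2*tau)"
    by linarith
qed

lemma strongly_convex_interp_minimizing_Cauchy:
  fixes G :: "'a::metric_space \<Rightarrow> real"
  assumes conv: "strongly_convex_interp_on mu S G" and mu: "mu > 0"
    and inf: "\<And>x. x \<in> S \<Longrightarrow> I \<le> G x"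
    and xs: "\<And>n. xs n \<in> S" "\<And>n. G (xs n) < I + 1 / real (Suc n)"
  shows "Cauchy xs"
proof (rule metric_CauchyI)
  fix e :: real assume e: "e > 0"
  obtain N where N: "8 / (mu * e^2) < real N" using reals_Archimedean2 by blast
  have "dist (xs m) (xs n) < e" if "m \<ge> N" "n \<ge> N" for m n
  proof -
    have interp: "\<forall>x0\<in>S. \<forall>x1\<in>S. \<forall>t\<in>{0..1}. \<exists>w\<in>S.
        G w \<le> (1-t) * G x0 + t * G x1 - mu/2 * t * (1-t) * (dist x0 x1)^2"
      using conv by (simp add: strongly_convex_interp_on_def)
    obtain w where "w \<in> S" and w: "G w \<le> (1 - 1/2) * G (xs m) + 1/2 * G (xs n)
        - mu/2 * (1/2) * (1 - 1/2) * (dist (xs m) (xs n))^2"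
      using bspec[OF bspec[OF bspec[OF interp xs(1)[of m]] xs(1)[of n]], of "1/2"] by auto
    have "(1 - 1/2) * G (xs m) + 1/2 * G (xs n) - mu/2 * (1/2) * (1 - 1/2) * (dist (xs m) (xs n))^2
        = G (xs m) / 2 + G (xs n) / 2 - mu/8 * (dist (xs m) (xs n))^2"
      by (simp add: field_simps)
    moreover have "1 / real (Suc m) \<le> 1 / real (Suc N)" "1 / real (Suc n) \<le> 1 / real (Suc N)"
      using that by (auto intro!: divide_left_mono)
    ultimately have "mu/8 * (dist (xs m) (xs n))^2 < 1 / real (Suc N)"
      using w inf[OF \<open>w \<in> S\<close>] xs(2)[of m] xs(2)[of n] by linarith
    then have "mu * (dist (xs m) (xs n))^2 < 8 / real (Suc N)" by (simp add: field_simps)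
    also have "\<dots> < mu * e^2"
    proof -
      have "8 / (mu * e^2) < real (Suc N)" using N by simp
      then show ?thesis using mu e by (simp add: field_simps)
    qed
    finally have "(dist (xs m) (xs n))^2 < e^2" using mu by simp
    then show ?thesis using e by (simp add: power_less_imp_less_base)
  qed
  then show "\<exists>M. \<forall>m\<ge>M. \<forall>n\<ge>M. dist (xs m) (xs n) < e" by blast
qed

lemma strongly_convex_interp_has_min:
  fixes G :: "'a::complete_space \<Rightarrow> real"
  assumes "S \<noteq> {}" and lsc: "lsc_extended S G" and bdd: "bdd_below (G ` S)"
    and conv: "strongly_convex_interp_on mu S G" and mu: "mu > 0"
  obtains m where "m \<in> S" "\<forall>x\<in>S. G m \<le> G x"
proof -
  define I where "I = Inf (G ` S)"
  have I: "I \<le> G x" if "x \<in> S" for x unfolding I_def using bdd that by (simp add: cInf_lower)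
  have "\<exists>x\<in>S. G x < I + 1 / real (Suc n)" for n
    using cInf_less_iff[of "G ` S" "I + 1 / real (Suc n)"] \<open>S \<noteq> {}\<close> bdd
    unfolding I_def by auto
  then obtain xs where xs: "\<And>n. xs n \<in> S" "\<And>n. G (xs n) < I + 1 / real (Suc n)" by metis
  have "Cauchy xs" by (rule strongly_convex_interp_minimizing_Cauchy[OF conv mu I xs])
  then obtain L where L: "xs \<longlonglongrightarrow> L" using Cauchy_convergent_iff convergent_def by blast
  have "L \<in> S \<and> G L \<le> I"
  proof (rule ccontr)
    assume nc: "\<not> (L \<in> S \<and> G L \<le> I)"
    define d where "d = (if L \<in> S then (G L - I) / 2 else 1)"
    have d: "d > 0" "L \<in> S \<Longrightarrow> I + d < G L" using nc unfolding d_def by (auto simp: field_simps)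
    obtain r where r: "r > 0" "\<forall>x\<in>S. dist x L < r \<longrightarrow> I + d < G x"
      using lsc d unfolding lsc_extended_def by blast
    obtain N1 where N1: "\<forall>n\<ge>N1. dist (xs n) L < r" using L r(1) lim_sequentially by blast
    obtain N2 where N2: "1 / d < real N2" using reals_Archimedean2 by blast
    define n where "n = max N1 N2"
    have "I + d < G (xs n)" using r(2) N1 xs(1) by (simp add: n_def)
    moreover have "1 / d < real (Suc n)" using N2 by (simp add: n_def)
    then have "1 / real (Suc n) < d" using d by (simp add: field_simps)
    ultimately show False using xs(2)[of n] by simp
  qed
  then show ?thesis using I that by force
qed

lemma maximin_perturbation_estimate:
  fixes F :: "'a::metric_space \<Rightarrow> 'b \<Rightarrow> real"
  assumes mu: "mu > 0" and xs: "xs \<in> S" and xs_min: "\<forall>x\<in>S. F xs ys \<le> F x ys"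
    and conv: "strongly_convex_interp_on mu S (\<lambda>x. F x ys)"
    and xt: "xt \<in> S" and t: "0 < t" "t \<le> 1/2"
    and perturbed: "(1-t) * F xt ys + t * F xt y \<le> F xs ys"
  shows "F xt y \<le> F xs ys" and "mu/4 * (dist xs xt)^2 \<le> t * (F xs ys - F xt y)"
proof -
  define D where "D = (dist xs xt)^2"
  have "F xs ys + mu/2 * D \<le> F xt ys"
    unfolding D_def by (rule strongly_convex_interp_quadratic_growth[OF conv xs xs_min xt])
  then have "(1-t) * (F xs ys + mu/2 * D) \<le> (1-t) * F xt ys"
    using t by (intro mult_left_mono) auto
  moreover have "(1-t) * (F xs ys + mu/2 * D) = F xs ys - t * F xs ys + (1-t) * (mu/2 * D)"
    "t * (F xs ys - F xt y) = t * F xs ys - t * F xt y"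
    by (simp_all add: algebra_simps)
  ultimately have key: "(1-t) * (mu/2 * D) \<le> t * (F xs ys - F xt y)" using perturbed by linarith
  have D: "0 \<le> mu/2 * D" using mu by (simp add: D_def)
  then have "(1/2) * (mu/2 * D) \<le> (1-t) * (mu/2 * D)" using t by (intro mult_right_mono) auto
  then have "mu/4 * D \<le> (1-t) * (mu/2 * D)" by simp
  with key show "mu/4 * (dist xs xt)^2 \<le> t * (F xs ys - F xt y)" by (simp add: D_def)
  moreover have "0 \<le> (1-t) * (mu/2 * D)" using D t by simp
  ultimately have "0 \<le> t * (F xs ys - F xt y)" using key by linarith
  then show "F xt y \<le> F xs ys" using t by (simp add: zero_le_mult_iff)
qed

text \<open>Moving \<open>ys\<close> slightly towards \<open>y\<close>, the minimizers \<open>xt\<close> of the perturbed problems stay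
  close to \<open>xs\<close>, and lower semicontinuity at \<open>xs\<close> transfers \<open>F xt y \<le> F xs ys\<close> to \<open>xs\<close>.\<close>

lemma maximin_point_is_saddle:
  fixes F :: "'a::metric_space \<Rightarrow> 'b::metric_space \<Rightarrow> real"
  assumes mu: "mu > 0" and xs: "xs \<in> S" and xs_min: "\<forall>x\<in>S. F xs ys \<le> F x ys"
    and conv: "strongly_convex_interp_on mu S (\<lambda>x. F x ys)"
    and lsc: "lsc_extended S (\<lambda>x. F x y)"
    and maximin: "\<And>w. w \<in> T \<Longrightarrow> \<exists>x\<in>S. F x w \<le> F xs ys \<and> (\<forall>x'\<in>S. F x w \<le> F x' w)"
    and concave: "\<And>t. t \<in> {0..1} \<Longrightarrow> \<exists>w\<in>T. \<forall>x\<in>S.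
                    (1-t) * F x ys + t * F x y + mu/2 * t * (1-t) * (dist ys y)^2 \<le> F x w"
    and y: "y \<in> T"
  shows "F xs y \<le> F xs ys"
proof (rule field_le_epsilon)
  fix e :: real assume e: "e > 0"
  obtain xy where "xy \<in> S" and xy: "F xy y \<le> F xs ys" "\<forall>x'\<in>S. F xy y \<le> F x' y"
    using maximin[OF y] by blast
  define K where "K = F xs ys - F xy y"
  have K: "K \<ge> 0" using xy by (simp add: K_def)
  have "F xs y - e < F xs y" using e by simp
  then obtain r where r: "r > 0" "\<forall>x\<in>S. dist x xs < r \<longrightarrow> F xs y - e < F x y"
    using lsc xs unfolding lsc_extended_def by blast
  define t where "t = min (1/2) (mu * r^2 / (8 * (K + 1)))"
  have "mu * r^2 / (8 * (K + 1)) > 0" using mu r K by simp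
  then have "0 < t" by (simp add: t_def)
  moreover have "t \<le> 1/2" "t \<le> mu * r^2 / (8 * (K + 1))"
    unfolding t_def by (rule min.cobounded1, rule min.cobounded2)
  ultimately have t: "0 < t" "t \<le> 1/2" "t \<le> mu * r^2 / (8 * (K + 1))" by blast+
  then have "t \<in> {0..1}" by simp
  then obtain w where "w \<in> T"
    and w: "\<forall>x\<in>S. (1-t) * F x ys + t * F x y + mu/2 * t * (1-t) * (dist ys y)^2 \<le> F x w"
    using concave by blast
  then obtain xt where xt: "xt \<in> S" "F xt w \<le> F xs ys" using maximin by blast
  have "(1-t) * F xt ys + t * F xt y + mu/2 * t * (1-t) * (dist ys y)^2 \<le> F xt w"
    using w xt(1) by blast
  moreover have "0 \<le> mu/2 * t * (1-t) * (dist ys y)^2" using mu t by simp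
  ultimately have "(1-t) * F xt ys + t * F xt y \<le> F xs ys" using xt(2) by linarith
  note estimate = maximin_perturbation_estimate[OF mu xs xs_min conv xt(1) t(1,2) this]
  have "t * (F xs ys - F xt y) \<le> t * K"
    using xy(2) xt(1) t by (intro mult_left_mono) (auto simp: K_def)
  with estimate(2) have "mu/4 * (dist xs xt)^2 \<le> t * K" by linarith
  also have "t * K \<le> mu * r^2 / (8 * (K + 1)) * K" using t K by (intro mult_right_mono) auto
  also have "\<dots> < mu * r^2 / 8"
    using K mu r by (simp add: field_simps)
  finally have "2 * (dist xs xt)^2 < r^2" using mu by (simp add: field_simps)
  then have "(dist xs xt)^2 < r^2" using zero_le_power2[of "dist xs xt"] by linarith
  then have "(dist xt xs)^2 < r^2" by (simp add: dist_commute)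
  then have "dist xt xs < r" using r by (simp add: power_less_imp_less_base)
  then show "F xs y \<le> F xs ys + e" using r(2) xt(1) estimate(1) by fastforce
qed

lemma min_value_usc:
  assumes xa: "xa \<in> S"
    and X: "\<And>y. y \<in> T \<Longrightarrow> X y \<in> S" "\<And>y x. y \<in> T \<Longrightarrow> x \<in> S \<Longrightarrow> F (X y) y \<le> F x y"
    and usc: "\<And>x. x \<in> S \<Longrightarrow> lsc_extended T (\<lambda>y. - F x y)"
  shows "lsc_extended T (\<lambda>y. - F (X y) y)"
  unfolding lsc_extended_def
proof (intro allI impI)
  fix y0 c assume c: "y0 \<in> T \<longrightarrow> c < - F (X y0) y0"
  define x1 where "x1 = (if y0 \<in> T then X y0 else xa)"
  have "x1 \<in> S" using X xa by (simp add: x1_def)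
  moreover have "y0 \<in> T \<longrightarrow> c < - F x1 y0" using c by (simp add: x1_def)
  ultimately obtain r where "r > 0" and r: "\<forall>y\<in>T. dist y y0 < r \<longrightarrow> c < - F x1 y"
    using usc unfolding lsc_extended_def by blast
  have "c < - F (X y) y" if "y \<in> T" "dist y y0 < r" for y
  proof -
    have "c < - F x1 y" using r that by blast
    moreover have "F (X y) y \<le> F x1 y" using X(2)[OF that(1) \<open>x1 \<in> S\<close>] .
    ultimately show ?thesis by linarith
  qed
  with \<open>r > 0\<close> show "\<exists>r>0. \<forall>y\<in>T. dist y y0 < r \<longrightarrow> c < - F (X y) y" by blast
qed

lemma min_value_strongly_concave:
  assumes X: "\<And>y. y \<in> T \<Longrightarrow> X y \<in> S" "\<And>y x. y \<in> T \<Longrightarrow> x \<in> S \<Longrightarrow> F (X y) y \<le> F x y"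
    and concave: "\<And>y0 y1 t. y0 \<in> T \<Longrightarrow> y1 \<in> T \<Longrightarrow> t \<in> {0..1} \<Longrightarrow> \<exists>w\<in>T. \<forall>x\<in>S.
                    (1-t) * F x y0 + t * F x y1 + mu/2 * t * (1-t) * (dist y0 y1)^2 \<le> F x w"
  shows "strongly_convex_interp_on mu T (\<lambda>y. - F (X y) y)"
  unfolding strongly_convex_interp_on_def
proof (intro ballI)
  fix y0 y1 t assume y0: "y0 \<in> T" and y1: "y1 \<in> T" and t: "t \<in> {0..1::real}"
  obtain w where "w \<in> T"
    and w: "\<forall>x\<in>S. (1-t) * F x y0 + t * F x y1 + mu/2 * t * (1-t) * (dist y0 y1)^2 \<le> F x w"
    using concave[OF y0 y1 t] by blast
  have "(1-t) * F (X y0) y0 \<le> (1-t) * F (X w) y0" "t * F (X y1) y1 \<le> t * F (X w) y1"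
    using X(2)[OF y0 X(1)[OF \<open>w \<in> T\<close>]] X(2)[OF y1 X(1)[OF \<open>w \<in> T\<close>]] t
    by (auto intro!: mult_left_mono)
  moreover have "(1-t) * F (X w) y0 + t * F (X w) y1 + mu/2 * t * (1-t) * (dist y0 y1)^2 \<le> F (X w) w"
    using w X(1)[OF \<open>w \<in> T\<close>] by blast
  ultimately have "(1-t) * F (X y0) y0 + t * F (X y1) y1 + mu/2 * t * (1-t) * (dist y0 y1)^2 \<le> F (X w) w"
    by linarith
  with \<open>w \<in> T\<close> show "\<exists>w\<in>T. - F (X w) w
      \<le> (1-t) * - F (X y0) y0 + t * - F (X y1) y1 - mu/2 * t * (1-t) * (dist y0 y1)^2"
    by (intro bexI[of _ w]) (auto simp: algebra_simps)
qed

text \<open>A minimax theorem: the saddle point is obtained as a maximizer of the minimum value.\<close>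

lemma strongly_convex_concave_has_saddle:
  fixes F :: "'a::complete_space \<Rightarrow> 'b::complete_space \<Rightarrow> real"
  assumes "S \<noteq> {}" "T \<noteq> {}" and mu: "mu > 0"
    and lsc: "\<And>y. y \<in> T \<Longrightarrow> lsc_extended S (\<lambda>x. F x y)"
    and usc: "\<And>x. x \<in> S \<Longrightarrow> lsc_extended T (\<lambda>y. - F x y)"
    and bdd_below: "\<And>y. y \<in> T \<Longrightarrow> bdd_below ((\<lambda>x. F x y) ` S)"
    and bdd_above: "\<And>x. x \<in> S \<Longrightarrow> bdd_above (F x ` T)"
    and convex: "\<And>y. y \<in> T \<Longrightarrow> strongly_convex_interp_on mu S (\<lambda>x. F x y)"
    and concave: "\<And>y0 y1 t. y0 \<in> T \<Longrightarrow> y1 \<in> T \<Longrightarrow> t \<in> {0..1} \<Longrightarrow> \<exists>w\<in>T. \<forall>x\<in>S.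
                    (1-t) * F x y0 + t * F x y1 + mu/2 * t * (1-t) * (dist y0 y1)^2 \<le> F x w"
  obtains p where "saddle_on S T F p"
proof -
  have "\<exists>x\<in>S. \<forall>x'\<in>S. F x y \<le> F x' y" if "y \<in> T" for y
    using strongly_convex_interp_has_min[OF \<open>S \<noteq> {}\<close> lsc bdd_below convex mu] that by metis
  then obtain X where X: "\<And>y. y \<in> T \<Longrightarrow> X y \<in> S" "\<And>y x. y \<in> T \<Longrightarrow> x \<in> S \<Longrightarrow> F (X y) y \<le> F x y"
    by metis
  obtain xa where xa: "xa \<in> S" using \<open>S \<noteq> {}\<close> by blast
  obtain B where "\<forall>y\<in>T. F xa y \<le> B" using bdd_above[OF xa] by (auto simp: bdd_above_def)
  then have "\<forall>y\<in>T. - B \<le> - F (X y) y" using X(2) xa by force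
  then have "bdd_below ((\<lambda>y. - F (X y) y) ` T)" by (intro bdd_belowI[of _ "- B"]) auto
  then obtain ys where ys: "ys \<in> T" "\<forall>y\<in>T. - F (X ys) ys \<le> - F (X y) y"
    using strongly_convex_interp_has_min[OF \<open>T \<noteq> {}\<close> min_value_usc[OF xa X usc]
        _ min_value_strongly_concave[OF X concave] mu]
    by blast
  have "F (X ys) y \<le> F (X ys) ys" if "y \<in> T" for y
  proof (rule maximin_point_is_saddle[OF mu X(1)[OF ys(1)] _ convex[OF ys(1)] lsc[OF that]])
    show "\<forall>x\<in>S. F (X ys) ys \<le> F x ys" using X(2) ys(1) by blast
    show "\<exists>x\<in>S. F x w \<le> F (X ys) ys \<and> (\<forall>x'\<in>S. F x w \<le> F x' w)" if "w \<in> T" for w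
    proof (intro bexI[of _ "X w"] conjI ballI)
      show "F (X w) w \<le> F (X ys) ys" using ys(2) that by fastforce
      show "F (X w) w \<le> F x' w" if "x' \<in> S" for x' using X(2) \<open>w \<in> T\<close> that by blast
      show "X w \<in> S" using X(1) that by blast
    qed
    show "\<exists>w\<in>T. \<forall>x\<in>S. (1-t) * F x ys + t * F x y + mu/2 * t * (1-t) * (dist ys y)^2 \<le> F x w"
      if "t \<in> {0..1}" for t
      using concave[OF ys(1) \<open>y \<in> T\<close> that] .
  qed (fact that)
  then have "saddle_on S T F (X ys, ys)" using X ys(1) by (auto simp: saddle_on_def)
  then show ?thesis by (rule that)
qed

lemma saddle_on_value_gap:
  assumes convex: "strongly_convex_interp_on mu S (\<lambda>x. F x b)"
    and concave: "strongly_convex_interp_on mu T (\<lambda>y. - F a y)"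
    and s: "saddle_on S T F (a, b)" and x: "x \<in> S" and y: "y \<in> T"
  shows "mu/2 * ((dist a x)^2 + (dist b y)^2) \<le> F x b - F a y"
proof -
  have "F a b + mu/2 * (dist a x)^2 \<le> F x b"
    using strongly_convex_interp_quadratic_growth[OF convex _ _ x] s by (simp add: saddle_on_def)
  moreover have "- F a b + mu/2 * (dist b y)^2 \<le> - F a y"
    using strongly_convex_interp_quadratic_growth[OF concave _ _ y] s by (simp add: saddle_on_def)
  ultimately show ?thesis by (simp add: algebra_simps)
qed

lemma saddle_on_unique:
  assumes mu: "mu > 0"
    and convex: "\<And>y. y \<in> T \<Longrightarrow> strongly_convex_interp_on mu S (\<lambda>x. F x y)"
    and concave: "\<And>x. x \<in> S \<Longrightarrow> strongly_convex_interp_on mu T (\<lambda>y. - F x y)"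
    and p: "saddle_on S T F p" and p': "saddle_on S T F p'"
  shows "p = p'"
proof -
  obtain a b a' b' where ab: "p = (a, b)" "p' = (a', b')" by fastforce
  have in_ST: "a \<in> S" "b \<in> T" "a' \<in> S" "b' \<in> T" using p p' by (simp_all add: saddle_on_def ab)
  have "mu/2 * ((dist a a')^2 + (dist b b')^2) \<le> F a' b - F a b'"
    using saddle_on_value_gap[OF convex concave _ in_ST(3,4)] p in_ST by (simp add: ab)
  also have "F a' b - F a b' \<le> 0"
    using p' in_ST by (force simp: saddle_on_def ab)
  finally have "(dist a a')^2 + (dist b b')^2 \<le> 0" using mu by (simp add: mult_le_0_iff)
  then show ?thesis using ab by (simp add: sum_power2_le_zero_iff)
qed

section \<open>Slopes\<close>

lemma phi_eq_ereal_on_Dom: "x \<in> DX phi \<Longrightarrow> y \<in> DY phi \<Longrightarrow> phi x y = ereal (real_of_ereal (phi x y))"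
  unfolding DX_def DY_def by (cases "phi x y") auto

definition slope_quotient :: "('x::metric_space \<Rightarrow> 'y::metric_space \<Rightarrow> ereal) \<Rightarrow> 'x \<times> 'y \<Rightarrow> 'x \<times> 'y \<Rightarrow> ereal" where
  "slope_quotient phi z = (\<lambda>z'. max (phi (fst z) (snd z') - phi (fst z') (snd z)) 0 / ereal (dist z' z))"

lemma slope_eq_Limsup:
  "z \<in> Dom phi \<Longrightarrow> z islimpt Dom phi \<Longrightarrow> slope phi z = Limsup (at z within Dom phi) (slope_quotient phi z)"
  by (simp add: slope_def slope_quotient_def)

lemma slope_nonneg: "0 \<le> slope phi z"
proof (cases "z \<in> Dom phi \<and> z islimpt Dom phi")
  case True
  then have "at z within Dom phi \<noteq> bot" by (simp add: trivial_limit_within)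
  moreover have "0 \<le> slope_quotient phi z z'" for z'
    by (simp add: slope_quotient_def divide_ereal_def ereal_inverse_nonneg_iff)
  ultimately have "0 \<le> Limsup (at z within Dom phi) (slope_quotient phi z)"
    by (intro le_Limsup) auto
  then show ?thesis using True by (simp add: slope_eq_Limsup)
next
  case False
  then show ?thesis by (auto simp: slope_def)
qed

lemma slope_quotient_eq_real:
  assumes "z \<in> Dom phi" "z' \<in> Dom phi" "z' \<noteq> z"
  shows "slope_quotient phi z z' = ereal (max (real_of_ereal (phi (fst z) (snd z'))
           - real_of_ereal (phi (fst z') (snd z))) 0 / dist z' z)"
proof -
  have "fst z \<in> DX phi" "snd z' \<in> DY phi" "fst z' \<in> DX phi" "snd z \<in> DY phi"
    using assms by (auto simp: Dom_def mem_Times_iff)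
  then obtain u v where "phi (fst z) (snd z') = ereal u" "phi (fst z') (snd z) = ereal v"
    using phi_eq_ereal_on_Dom by metis
  then show ?thesis using assms(3) by (simp add: slope_quotient_def zero_ereal_def ereal_max[symmetric] del: ereal_max)
qed

lemma Limsup_within_ge_of_approx:
  fixes f :: "'a::metric_space \<Rightarrow> ereal"
  assumes approx: "\<And>e. e > 0 \<Longrightarrow> \<exists>w\<in>S. w \<noteq> z \<and> dist w z < e \<and> ereal (L - e) \<le> f w"
  shows "ereal L \<le> Limsup (at z within S) f"
proof (rule Limsup_greatest)
  fix Q assume "eventually Q (at z within S)"
  then obtain d where d: "d > 0" "\<forall>w\<in>S. w \<noteq> z \<and> dist w z < d \<longrightarrow> Q w"
    unfolding eventually_at by blast
  show "ereal L \<le> (SUP w\<in>Collect Q. f w)"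
  proof (rule ereal_le_epsilon2)
    fix e :: real assume "e > 0"
    then obtain w where w: "w \<in> S" "w \<noteq> z" "dist w z < min d e" "ereal (L - min d e) \<le> f w"
      using approx[of "min d e"] d(1) by auto
    then have "f w \<le> (SUP w\<in>Collect Q. f w)" using d(2) by (auto intro: SUP_upper)
    moreover have "ereal (L - e) \<le> ereal (L - min d e)" by simp
    ultimately have "ereal (L - e) + ereal e \<le> (SUP w\<in>Collect Q. f w) + ereal e"
      using w(4) by (intro add_right_mono) (meson order_trans)
    then show "ereal L \<le> (SUP w\<in>Collect Q. f w) + ereal e" by simp
  qed
qed

section \<open>The resolvent\<close>

lemma admissible_tau_pos: "admissible_tau lam q \<Longrightarrow> 0 < q"
  by (simp add: admissible_tau_def)

lemma admissible_tau_one_plus_pos: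
  assumes "admissible_tau lam q"
  shows "0 < 1 + lam * q"
proof (cases "lam \<ge> 0")
  case True
  then show ?thesis using admissible_tau_pos[OF assms] by (intro add_pos_nonneg) auto
next
  case False
  then have "q < 1 / (- lam)" using assms by (simp add: admissible_tau_def neg_part_def)
  then have "q * (- lam) < 1" using False by (simp add: field_simps)
  then show ?thesis by (simp add: algebra_simps)
qed

lemma admissible_tau_modulus_pos:
  assumes "admissible_tau lam q"
  shows "0 < 1/q + lam"
proof -
  have "1/q + lam = (1 + lam * q) / q" using admissible_tau_pos[OF assms] by (simp add: field_simps)
  then show ?thesis using admissible_tau_pos[OF assms] admissible_tau_one_plus_pos[OF assms] by simp
qed

lemma admissible_tau_arbitrarily_small:
  assumes "admissible_tau lam tau" and "e > 0"
  shows "\<exists>q>0. q < e \<and> admissible_tau lam q"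
proof (intro exI conjI)
  show "0 < min (e/2) tau" "min (e/2) tau < e"
    using assms admissible_tau_pos[OF assms(1)] by auto
  then show "admissible_tau lam (min (e/2) tau)"
    using assms(1) by (auto simp: admissible_tau_def)
qed

definition Phi_real :: "('x::metric_space \<Rightarrow> 'y::metric_space \<Rightarrow> ereal) \<Rightarrow> real \<Rightarrow> 'x \<Rightarrow> 'y \<Rightarrow> 'x \<Rightarrow> 'y \<Rightarrow> real" where
  "Phi_real phi q xb yb x y = real_of_ereal (phi x y) + ((dist x xb)^2 - (dist y yb)^2) / (2*q)"

lemma Phi_eq_Phi_real:
  "x \<in> DX phi \<Longrightarrow> y \<in> DY phi \<Longrightarrow> Phi phi q xb yb x y = ereal (Phi_real phi q xb yb x y)"
  unfolding DX_def DY_def by (cases "phi x y") (auto simp: Phi_def Phi_real_def)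

lemma saddle_on_Phi_real_cross_difference:
  assumes s: "saddle_on (DX phi) (DY phi) (Phi_real phi q xb yb) (a, b)" and q: "q > 0"
    and x: "x \<in> DX phi" and y: "y \<in> DY phi"
  shows "real_of_ereal (phi a y) - real_of_ereal (phi x b)
           \<le> ((dist (x, y) (xb, yb))^2 - (dist (a, b) (xb, yb))^2) / (2*q)"
proof -
  have "Phi_real phi q xb yb a y \<le> Phi_real phi q xb yb a b" "Phi_real phi q xb yb a b \<le> Phi_real phi q xb yb x b"
    using s x y by (simp_all add: saddle_on_def)
  then have "real_of_ereal (phi a y) - real_of_ereal (phi x b)
      \<le> ((dist x xb)^2 - (dist b yb)^2) / (2*q) - ((dist a xb)^2 - (dist y yb)^2) / (2*q)"
    by (simp add: Phi_real_def)
  also have "\<dots> = ((dist (x, y) (xb, yb))^2 - (dist (a, b) (xb, yb))^2) / (2*q)"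
    by (simp add: dist_Pair_Pair add_divide_distrib diff_divide_distrib algebra_simps)
  finally show ?thesis .
qed

locale resolvent_setting =
  fixes phi :: "'x::complete_space \<Rightarrow> 'y::complete_space \<Rightarrow> ereal" and lam tau :: real
  assumes proper: "proper_fun phi" and closed: "closed_fun phi" and A1: "A1 phi"
    and A2: "A2 phi lam" and tau: "admissible_tau lam tau"
begin

lemma DX_nonempty: "DX phi \<noteq> {}" and DY_nonempty: "DY phi \<noteq> {}"
  using proper by (auto simp: proper_fun_def Dom_def)

lemma phi_infty_outside_DX: "x \<notin> DX phi \<Longrightarrow> y \<in> DY phi \<Longrightarrow> phi x y = \<infinity>"
  using A1 by (auto simp: A1_def)

lemma phi_minfty_outside_DY: "x \<in> DX phi \<Longrightarrow> y \<notin> DY phi \<Longrightarrow> phi x y = -\<infinity>"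
  using A1 by (auto simp: A1_def)

lemma Phi_real_lsc:
  assumes y: "y \<in> DY phi"
  shows "lsc_extended (DX phi) (\<lambda>x. Phi_real phi q xb yb x y)"
  unfolding Phi_real_def
proof (rule lsc_extended_add_continuous[where f = "\<lambda>x. phi x y"])
  show "lsc (\<lambda>x. phi x y)" using closed y by (simp add: closed_fun_def)
  show "phi x y = ereal (real_of_ereal (phi x y))" if "x \<in> DX phi" for x
    using phi_eq_ereal_on_Dom[OF that y] .
  show "phi x y = \<infinity>" if "x \<notin> DX phi" for x using phi_infty_outside_DX[OF that y] .
  show "isCont (\<lambda>x. ((dist x xb)^2 - (dist y yb)^2) / (2*q)) x" for x
    unfolding divide_inverse by (intro continuous_intros)
qed

lemma Phi_real_usc:
  assumes x: "x \<in> DX phi"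
  shows "lsc_extended (DY phi) (\<lambda>y. - Phi_real phi q xb yb x y)"
proof -
  have "lsc_extended (DY phi)
      (\<lambda>y. - real_of_ereal (phi x y) + - (((dist x xb)^2 - (dist y yb)^2) / (2*q)))"
  proof (rule lsc_extended_add_continuous[where f = "\<lambda>y. - phi x y"])
    have "{y. c < - phi x y} = {y. phi x y < - c}" for c by (auto simp: ereal_less_uminus_reorder)
    then show "lsc (\<lambda>y. - phi x y)" using closed x by (simp add: closed_fun_def usc_def lsc_def)
    show "- phi x y = ereal (- real_of_ereal (phi x y))" if "y \<in> DY phi" for y
      using x that by (cases "phi x y") (auto simp: DX_def DY_def)
    show "- phi x y = \<infinity>" if "y \<notin> DY phi" for y using phi_minfty_outside_DY[OF x that] by simp
    show "isCont (\<lambda>y. - (((dist x xb)^2 - (dist y yb)^2) / (2*q))) y" for y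
      unfolding divide_inverse by (intro continuous_intros)
  qed
  then show ?thesis by (simp add: Phi_real_def)
qed

lemma A2_interpolants:
  assumes x0: "x0 \<in> DX phi" and x1: "x1 \<in> DX phi" and y0: "y0 \<in> DY phi" and y1: "y1 \<in> DY phi"
    and t: "t \<in> {0..1}"
  shows "\<exists>xt\<in>DX phi. \<exists>yt\<in>DY phi.
    (\<forall>q y. admissible_tau lam q \<longrightarrow> y \<in> DY phi \<longrightarrow> Phi_real phi q xb yb xt y
       \<le> (1-t) * Phi_real phi q xb yb x0 y + t * Phi_real phi q xb yb x1 y
          - (1/q + lam)/2 * t * (1-t) * (dist x0 x1)^2) \<and>
    (\<forall>q x. admissible_tau lam q \<longrightarrow> x \<in> DX phi \<longrightarrow>
       (1-t) * Phi_real phi q xb yb x y0 + t * Phi_real phi q xb yb x y1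
          + (1/q + lam)/2 * t * (1-t) * (dist y0 y1)^2 \<le> Phi_real phi q xb yb x yt)"
proof -
  have "(x0, y0) \<in> Dom phi" "(x1, y1) \<in> Dom phi" using assms by (auto simp: Dom_def)
  then obtain \<gamma> \<sigma> where ends: "\<gamma> 0 = x0" "\<gamma> 1 = x1" "\<sigma> 0 = y0" "\<sigma> 1 = y1"
    and cc: "\<And>q. admissible_tau lam q \<Longrightarrow> convex_concave_along (Phi phi q xb yb) (1/q + lam) \<gamma> \<sigma>"
    using A2 unfolding A2_def by metis
  have cx: "Phi phi q xb yb (\<gamma> t) y \<le> ereal (1-t) * Phi phi q xb yb x0 y + ereal t * Phi phi q xb yb x1 y
      - ereal ((1/q + lam)/2 * t * (1-t) * (dist x0 x1)^2)" if "admissible_tau lam q" for q y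
    using cc[OF that] t ends unfolding convex_concave_along_def by auto
  have cy: "ereal (1-t) * Phi phi q xb yb x y0 + ereal t * Phi phi q xb yb x y1
      + ereal ((1/q + lam)/2 * t * (1-t) * (dist y0 y1)^2) \<le> Phi phi q xb yb x (\<sigma> t)"
    if "admissible_tau lam q" for q x
    using cc[OF that] t ends unfolding convex_concave_along_def by auto
  have xt: "\<gamma> t \<in> DX phi"
  proof (rule ccontr)
    assume "\<gamma> t \<notin> DX phi"
    then have "Phi phi tau xb yb (\<gamma> t) y0 = \<infinity>" using phi_infty_outside_DX y0 by (simp add: Phi_def)
    with cx[OF tau, of y0] x0 x1 y0 show False by (simp add: Phi_eq_Phi_real)
  qed
  have yt: "\<sigma> t \<in> DY phi"
  proof (rule ccontr)
    assume "\<sigma> t \<notin> DY phi"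
    then have "Phi phi tau xb yb x0 (\<sigma> t) = -\<infinity>" using phi_minfty_outside_DY x0 by (simp add: Phi_def)
    with cy[OF tau, of x0] x0 y0 y1 show False by (simp add: Phi_eq_Phi_real)
  qed
  have cx_real: "Phi_real phi q xb yb (\<gamma> t) y \<le> (1-t) * Phi_real phi q xb yb x0 y + t * Phi_real phi q xb yb x1 y
      - (1/q + lam)/2 * t * (1-t) * (dist x0 x1)^2" if "admissible_tau lam q" "y \<in> DY phi" for q y
    using cx[OF that(1), of y] xt x0 x1 that(2) by (simp add: Phi_eq_Phi_real)
  have cy_real: "(1-t) * Phi_real phi q xb yb x y0 + t * Phi_real phi q xb yb x y1
      + (1/q + lam)/2 * t * (1-t) * (dist y0 y1)^2 \<le> Phi_real phi q xb yb x (\<sigma> t)"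
    if "admissible_tau lam q" "x \<in> DX phi" for q x
    using cy[OF that(1), of x] yt y0 y1 that(2) by (simp add: Phi_eq_Phi_real)
  then show ?thesis
    using xt yt cx_real by (intro bexI[of _ "\<gamma> t"] bexI[of _ "\<sigma> t"] conjI allI impI) auto
qed

lemma dist_le_of_le_for_admissible_steps:
  assumes ineq: "\<And>q. admissible_tau lam q \<Longrightarrow> p + (dist u u0)^2 / (2*q)
      \<le> (1-t) * p0 + t * (p1 + D^2 / (2*q)) - (1/q + lam) / 2 * t * (1-t) * D^2"
    and "0 \<le> t" "0 \<le> D"
  shows "dist u u0 \<le> t * D"
proof -
  have "(dist u u0)^2 \<le> (t * D)^2"
  proof (rule le_sq_of_le_for_small_steps[where Q = "Collect (admissible_tau lam)" and p = p
        and p_start = p0 and p_end = p1 and lam = lam])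
    show "\<exists>q\<in>Collect (admissible_tau lam). 0 < q \<and> q < e" if "e > 0" for e
      using admissible_tau_arbitrarily_small[OF tau that] by blast
    show "p + (dist u u0)^2 / (2*q)
        \<le> (1-t) * p0 + t * (p1 + D^2 / (2*q)) - (1/q + lam) / 2 * t * (1-t) * D^2"
      if "q \<in> Collect (admissible_tau lam)" for q
      using ineq that by simp
  qed
  then show ?thesis by (rule power2_le_imp_le) (use assms(2,3) in auto)
qed

text \<open>When the reference point of \<open>\<Phi>\<^sub>q\<close> is the starting point of the curves, letting
  \<open>q \<rightarrow> 0\<close> in (A2) shows that they leave it no faster than linearly in \<open>t\<close>.\<close>

lemma A2_interpolants_from:
  assumes x0: "x0 \<in> DX phi" and x1: "x1 \<in> DX phi" and y0: "y0 \<in> DY phi" and y1: "y1 \<in> DY phi"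
    and t: "t \<in> {0..1}"
  shows "\<exists>xt\<in>DX phi. \<exists>yt\<in>DY phi. dist xt x0 \<le> t * dist x0 x1 \<and> dist yt y0 \<le> t * dist y0 y1 \<and>
    (\<forall>y\<in>DY phi. Phi_real phi tau x0 y0 xt y
       \<le> (1-t) * Phi_real phi tau x0 y0 x0 y + t * Phi_real phi tau x0 y0 x1 y
          - (1/tau + lam)/2 * t * (1-t) * (dist x0 x1)^2) \<and>
    (\<forall>x\<in>DX phi. (1-t) * Phi_real phi tau x0 y0 x y0 + t * Phi_real phi tau x0 y0 x y1
          + (1/tau + lam)/2 * t * (1-t) * (dist y0 y1)^2 \<le> Phi_real phi tau x0 y0 x yt)"
proof -
  obtain xt yt where xt: "xt \<in> DX phi" and yt: "yt \<in> DY phi"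
    and cx: "\<forall>q y. admissible_tau lam q \<longrightarrow> y \<in> DY phi \<longrightarrow> Phi_real phi q x0 y0 xt y
       \<le> (1-t) * Phi_real phi q x0 y0 x0 y + t * Phi_real phi q x0 y0 x1 y
          - (1/q + lam)/2 * t * (1-t) * (dist x0 x1)^2"
    and cy: "\<forall>q x. admissible_tau lam q \<longrightarrow> x \<in> DX phi \<longrightarrow>
       (1-t) * Phi_real phi q x0 y0 x y0 + t * Phi_real phi q x0 y0 x y1
          + (1/q + lam)/2 * t * (1-t) * (dist y0 y1)^2 \<le> Phi_real phi q x0 y0 x yt"
    using A2_interpolants[OF assms, where xb = x0 and yb = y0] by blast
  have "dist xt x0 \<le> t * dist x0 x1"
  proof (rule dist_le_of_le_for_admissible_steps)
    fix q assume q: "admissible_tau lam q"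
    have "Phi_real phi q x0 y0 xt y0 = real_of_ereal (phi xt y0) + (dist xt x0)^2 / (2*q)"
      "Phi_real phi q x0 y0 x0 y0 = real_of_ereal (phi x0 y0)"
      "Phi_real phi q x0 y0 x1 y0 = real_of_ereal (phi x1 y0) + (dist x0 x1)^2 / (2*q)"
      by (simp_all add: Phi_real_def dist_commute)
    with cx q y0 show "real_of_ereal (phi xt y0) + (dist xt x0)^2 / (2*q)
        \<le> (1-t) * real_of_ereal (phi x0 y0) + t * (real_of_ereal (phi x1 y0) + (dist x0 x1)^2 / (2*q))
           - (1/q + lam)/2 * t * (1-t) * (dist x0 x1)^2"
      by metis
  qed (use t in auto)
  moreover have "dist yt y0 \<le> t * dist y0 y1"
  proof (rule dist_le_of_le_for_admissible_steps)
    fix q assume q: "admissible_tau lam q"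
    have "Phi_real phi q x0 y0 x0 yt = real_of_ereal (phi x0 yt) - (dist yt y0)^2 / (2*q)"
      "Phi_real phi q x0 y0 x0 y0 = real_of_ereal (phi x0 y0)"
      "Phi_real phi q x0 y0 x0 y1 = real_of_ereal (phi x0 y1) - (dist y0 y1)^2 / (2*q)"
      by (simp_all add: Phi_real_def dist_commute)
    with cy q x0 have "(1-t) * real_of_ereal (phi x0 y0) + t * (real_of_ereal (phi x0 y1) - (dist y0 y1)^2 / (2*q))
        + (1/q + lam)/2 * t * (1-t) * (dist y0 y1)^2 \<le> real_of_ereal (phi x0 yt) - (dist yt y0)^2 / (2*q)"
      by metis
    moreover have "(1-t) * - real_of_ereal (phi x0 y0) = - ((1-t) * real_of_ereal (phi x0 y0))"
      "t * (- real_of_ereal (phi x0 y1) + (dist y0 y1)^2 / (2*q))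
        = - (t * (real_of_ereal (phi x0 y1) - (dist y0 y1)^2 / (2*q)))"
      by (simp_all add: algebra_simps)
    ultimately show "- real_of_ereal (phi x0 yt) + (dist yt y0)^2 / (2*q)
        \<le> (1-t) * - real_of_ereal (phi x0 y0) + t * (- real_of_ereal (phi x0 y1) + (dist y0 y1)^2 / (2*q))
           - (1/q + lam)/2 * t * (1-t) * (dist y0 y1)^2"
      by linarith
  qed (use t in auto)
  ultimately show ?thesis using xt yt cx cy tau by blast
qed

lemma Phi_real_bdd_below:
  assumes y: "y \<in> DY phi"
  shows "bdd_below ((\<lambda>x. Phi_real phi tau xb yb x y) ` DX phi)"
proof -
  obtain x0 where x0: "x0 \<in> DX phi" using DX_nonempty by blast
  \<comment> \<open>centred at \<open>(x0, y)\<close>, the start of the curves, where \<open>A2_interpolants_from\<close> controls them\<close>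
  define G where "G x = Phi_real phi tau x0 y x y" for x
  have "G x0 - 1 < G x0" by simp
  then obtain r where r: "r > 0" "\<forall>x\<in>DX phi. dist x x0 < r \<longrightarrow> G x0 - 1 < G x"
    using Phi_real_lsc[OF y] x0 unfolding G_def lsc_extended_def by blast
  have "\<forall>x1\<in>DX phi. \<forall>t\<in>{0..1}. \<exists>w\<in>DX phi. dist w x0 \<le> t * dist x0 x1 \<and>
      G w \<le> (1-t) * G x0 + t * G x1 - (1/tau + lam)/2 * t * (1-t) * (dist x0 x1)^2"
    using A2_interpolants_from[OF x0 _ y y] y unfolding G_def by blast
  then obtain B where B: "\<And>x. x \<in> DX phi \<Longrightarrow> B \<le> G x + ((dist x xb)^2 - (dist x x0)^2) / (2*tau)"
    using strongly_convex_from_point_recentred_bdd_below[OF admissible_tau_modulus_pos[OF tau] x0 r(1)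
        admissible_tau_pos[OF tau] r(2)]
    by blast
  have "B - (dist y yb)^2 / (2*tau) \<le> Phi_real phi tau xb yb x y" if "x \<in> DX phi" for x
    using B[OF that] by (simp add: G_def Phi_real_def diff_divide_distrib)
  then show ?thesis by (intro bdd_belowI) auto
qed

lemma Phi_real_bdd_above:
  assumes x: "x \<in> DX phi"
  shows "bdd_above (Phi_real phi tau xb yb x ` DY phi)"
proof -
  obtain y0 where y0: "y0 \<in> DY phi" using DY_nonempty by blast
  define G where "G y = - Phi_real phi tau x y0 x y" for y
  have "G y0 - 1 < G y0" by simp
  then obtain r where r: "r > 0" "\<forall>y\<in>DY phi. dist y y0 < r \<longrightarrow> G y0 - 1 < G y"
    using Phi_real_usc[OF x] y0 unfolding G_def lsc_extended_def by blast
  have "\<forall>y1\<in>DY phi. \<forall>t\<in>{0..1}. \<exists>w\<in>DY phi. dist w y0 \<le> t * dist y0 y1 \<and>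
      G w \<le> (1-t) * G y0 + t * G y1 - (1/tau + lam)/2 * t * (1-t) * (dist y0 y1)^2"
  proof (intro ballI)
    fix y1 t assume y1: "y1 \<in> DY phi" and t: "t \<in> {0..1::real}"
    then obtain w where "w \<in> DY phi" "dist w y0 \<le> t * dist y0 y1"
      and "(1-t) * Phi_real phi tau x y0 x y0 + t * Phi_real phi tau x y0 x y1
          + (1/tau + lam)/2 * t * (1-t) * (dist y0 y1)^2 \<le> Phi_real phi tau x y0 x w"
      using A2_interpolants_from[OF x x y0 y1 t] x by blast
    then show "\<exists>w\<in>DY phi. dist w y0 \<le> t * dist y0 y1 \<and>
        G w \<le> (1-t) * G y0 + t * G y1 - (1/tau + lam)/2 * t * (1-t) * (dist y0 y1)^2"
      unfolding G_def by (intro bexI[of _ w]) (auto simp: algebra_simps)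
  qed
  then obtain B where B: "\<And>y. y \<in> DY phi \<Longrightarrow> B \<le> G y + ((dist y yb)^2 - (dist y y0)^2) / (2*tau)"
    using strongly_convex_from_point_recentred_bdd_below[OF admissible_tau_modulus_pos[OF tau] y0 r(1)
        admissible_tau_pos[OF tau] r(2)]
    by blast
  have "Phi_real phi tau xb yb x y \<le> (dist x xb)^2 / (2*tau) - B" if "y \<in> DY phi" for y
    using B[OF that] by (simp add: G_def Phi_real_def diff_divide_distrib)
  then show ?thesis by (intro bdd_aboveI) auto
qed

lemma Phi_real_convex:
  assumes y: "y \<in> DY phi"
  shows "strongly_convex_interp_on (1/tau + lam) (DX phi) (\<lambda>x. Phi_real phi tau xb yb x y)"
  unfolding strongly_convex_interp_on_def
  using A2_interpolants[OF _ _ y y, where xb = xb and yb = yb] tau y by blast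

lemma Phi_real_concave_uniform:
  assumes y0: "y0 \<in> DY phi" and y1: "y1 \<in> DY phi" and t: "t \<in> {0..1}"
  shows "\<exists>w\<in>DY phi. \<forall>x\<in>DX phi. (1-t) * Phi_real phi tau xb yb x y0 + t * Phi_real phi tau xb yb x y1
           + (1/tau + lam)/2 * t * (1-t) * (dist y0 y1)^2 \<le> Phi_real phi tau xb yb x w"
proof -
  obtain x0 where x0: "x0 \<in> DX phi" using DX_nonempty by blast
  show ?thesis using A2_interpolants[OF x0 x0 y0 y1 t, where xb = xb and yb = yb] tau by blast
qed

lemma Phi_real_concave:
  assumes x: "x \<in> DX phi"
  shows "strongly_convex_interp_on (1/tau + lam) (DY phi) (\<lambda>y. - Phi_real phi tau xb yb x y)"
  unfolding strongly_convex_interp_on_def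
proof (intro ballI)
  fix y0 y1 t assume "y0 \<in> DY phi" "y1 \<in> DY phi" "t \<in> {0..1::real}"
  from Phi_real_concave_uniform[OF this] x obtain w where "w \<in> DY phi"
    and "(1-t) * Phi_real phi tau xb yb x y0 + t * Phi_real phi tau xb yb x y1
           + (1/tau + lam)/2 * t * (1-t) * (dist y0 y1)^2 \<le> Phi_real phi tau xb yb x w"
    by blast
  then show "\<exists>w\<in>DY phi. - Phi_real phi tau xb yb x w \<le> (1-t) * - Phi_real phi tau xb yb x y0
      + t * - Phi_real phi tau xb yb x y1 - (1/tau + lam)/2 * t * (1-t) * (dist y0 y1)^2"
    by (intro bexI[of _ w]) (auto simp: algebra_simps)
qed

lemma saddle_point_Phi_in_Dom:
  assumes "saddle_point (Phi phi tau xb yb) (a, b)"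
  shows "a \<in> DX phi" and "b \<in> DY phi"
proof -
  obtain xa ya where xa: "xa \<in> DX phi" and ya: "ya \<in> DY phi" using DX_nonempty DY_nonempty by blast
  have s1: "Phi phi tau xb yb a ya \<le> Phi phi tau xb yb a b"
    and s2: "Phi phi tau xb yb a b \<le> Phi phi tau xb yb xa b"
    using assms by (simp_all add: saddle_point_def)
  show "a \<in> DX phi"
  proof (rule ccontr)
    assume "a \<notin> DX phi"
    then have "Phi phi tau xb yb a ya = \<infinity>" using phi_infty_outside_DX[OF _ ya] by (simp add: Phi_def)
    with s1 s2 have "Phi phi tau xb yb xa b = \<infinity>" by simp
    then show False using xa by (cases "phi xa b") (auto simp: Phi_def DX_def)
  qed
  show "b \<in> DY phi"
  proof (rule ccontr)
    assume "b \<notin> DY phi"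
    then have "Phi phi tau xb yb xa b = -\<infinity>" using phi_minfty_outside_DY[OF xa] by (simp add: Phi_def)
    with s1 s2 have "Phi phi tau xb yb a ya = -\<infinity>" by simp
    then show False using ya by (cases "phi a ya") (auto simp: Phi_def DY_def)
  qed
qed

lemma saddle_point_Phi_iff:
  "saddle_point (Phi phi tau xb yb) p \<longleftrightarrow> saddle_on (DX phi) (DY phi) (Phi_real phi tau xb yb) p"
proof -
  obtain a b where p: "p = (a, b)" by fastforce
  show ?thesis
  proof
    assume s: "saddle_point (Phi phi tau xb yb) p"
    then have a: "a \<in> DX phi" and b: "b \<in> DY phi" using saddle_point_Phi_in_Dom by (simp_all add: p)
    from s have s1: "\<And>y. Phi phi tau xb yb a y \<le> Phi phi tau xb yb a b"
      and s2: "\<And>x. Phi phi tau xb yb a b \<le> Phi phi tau xb yb x b"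
      by (simp_all add: saddle_point_def p)
    have "Phi_real phi tau xb yb a y \<le> Phi_real phi tau xb yb a b" if "y \<in> DY phi" for y
      using s1[of y] a b that by (simp add: Phi_eq_Phi_real)
    moreover have "Phi_real phi tau xb yb a b \<le> Phi_real phi tau xb yb x b" if "x \<in> DX phi" for x
      using s2[of x] a b that by (simp add: Phi_eq_Phi_real)
    ultimately show "saddle_on (DX phi) (DY phi) (Phi_real phi tau xb yb) p"
      using a b by (simp add: saddle_on_def p)
  next
    assume s: "saddle_on (DX phi) (DY phi) (Phi_real phi tau xb yb) p"
    then have a: "a \<in> DX phi" and b: "b \<in> DY phi" by (simp_all add: saddle_on_def p)
    have "Phi phi tau xb yb a y \<le> Phi phi tau xb yb a b" for y
    proof (cases "y \<in> DY phi")
      case True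
      then show ?thesis using s a b by (simp add: saddle_on_def p Phi_eq_Phi_real)
    next
      case False
      then show ?thesis using phi_minfty_outside_DY[OF a False] by (simp add: Phi_def)
    qed
    moreover have "Phi phi tau xb yb a b \<le> Phi phi tau xb yb x b" for x
    proof (cases "x \<in> DX phi")
      case True
      then show ?thesis using s a b by (simp add: saddle_on_def p Phi_eq_Phi_real)
    next
      case False
      then show ?thesis using phi_infty_outside_DX[OF False b] by (simp add: Phi_def)
    qed
    ultimately show "saddle_point (Phi phi tau xb yb) p" by (simp add: saddle_point_def p)
  qed
qed

lemma J_saddle_on: "saddle_on (DX phi) (DY phi) (Phi_real phi tau (fst z) (snd z)) (J phi tau z)"
proof -
  have mu: "0 < 1/tau + lam" by (rule admissible_tau_modulus_pos[OF tau])
  obtain p where p: "saddle_on (DX phi) (DY phi) (Phi_real phi tau (fst z) (snd z)) p"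
    using strongly_convex_concave_has_saddle[OF DX_nonempty DY_nonempty mu Phi_real_lsc Phi_real_usc
        Phi_real_bdd_below Phi_real_bdd_above Phi_real_convex Phi_real_concave_uniform]
    by blast
  have "J phi tau z = p"
    unfolding J_def saddle_point_Phi_iff
  proof (rule the_equality)
    fix p' assume "saddle_on (DX phi) (DY phi) (Phi_real phi tau (fst z) (snd z)) p'"
    then show "p' = p" using saddle_on_unique[OF mu Phi_real_convex Phi_real_concave _ p] by blast
  qed (fact p)
  with p show ?thesis by simp
qed

lemma slope_quotient_at_resolvent_le:
  assumes w: "w \<in> Dom phi" "w \<noteq> J phi tau z"
  shows "slope_quotient phi (J phi tau z) w
           \<le> ereal ((dist (J phi tau z) z + dist w (J phi tau z) / 2) / tau)"
proof -
  obtain xb yb where z: "z = (xb, yb)" by fastforce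
  obtain a b where ab: "J phi tau z = (a, b)" by fastforce
  obtain x y where wxy: "w = (x, y)" by fastforce
  have s: "saddle_on (DX phi) (DY phi) (Phi_real phi tau xb yb) (a, b)"
    using J_saddle_on[of z] unfolding ab by (simp add: z)
  then have ab_Dom: "(a, b) \<in> Dom phi" by (simp add: saddle_on_def Dom_def)
  have x: "x \<in> DX phi" and y: "y \<in> DY phi" using w(1) by (auto simp: wxy Dom_def)
  have tau_pos: "0 < tau" by (rule admissible_tau_pos[OF tau])
  define D where "D = dist (a, b) z"
  define \<rho> where "\<rho> = dist w (a, b)"
  have \<rho>: "0 < \<rho>" using w(2) by (simp add: \<rho>_def ab)
  have "dist w z \<le> \<rho> + D" unfolding \<rho>_def D_def by (rule dist_triangle)
  then have "(dist w z)^2 \<le> (\<rho> + D)^2" by (simp add: power_mono)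
  have "real_of_ereal (phi a y) - real_of_ereal (phi x b) \<le> ((dist w z)^2 - D^2) / (2*tau)"
    using saddle_on_Phi_real_cross_difference[OF s tau_pos x y] by (simp add: wxy z D_def)
  also have "\<dots> \<le> ((\<rho> + D)^2 - D^2) / (2*tau)"
    using \<open>(dist w z)^2 \<le> (\<rho> + D)^2\<close> tau_pos by (intro divide_right_mono) auto
  also have "\<dots> = \<rho> * ((D + \<rho>/2) / tau)"
    using tau_pos by (simp add: field_simps power2_eq_square)
  finally have "max (real_of_ereal (phi a y) - real_of_ereal (phi x b)) 0 \<le> \<rho> * ((D + \<rho>/2) / tau)"
    using \<rho> tau_pos by (simp add: D_def)
  then have "max (real_of_ereal (phi a y) - real_of_ereal (phi x b)) 0 / \<rho> \<le> (D + \<rho>/2) / tau"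
    using \<rho> by (simp add: pos_divide_le_eq mult.commute)
  then show ?thesis
    using slope_quotient_eq_real[OF ab_Dom w(1) w(2)[unfolded ab]] by (simp add: ab wxy \<rho>_def D_def)
qed

lemma slope_resolvent_le: "slope phi (J phi tau z) \<le> ereal (dist (J phi tau z) z / tau)"
proof -
  let ?J = "J phi tau z"
  let ?g = "\<lambda>w. ereal ((dist ?J z + dist w ?J / 2) / tau)"
  have J_Dom: "?J \<in> Dom phi"
    using J_saddle_on[of z] by (simp add: saddle_on_def Dom_def mem_Times_iff)
  have tau_pos: "0 < tau" by (rule admissible_tau_pos[OF tau])
  show ?thesis
  proof (cases "?J islimpt Dom phi")
    case False
    then show ?thesis using J_Dom tau_pos by (simp add: slope_def)
  next
    case True
    then have "at ?J within Dom phi \<noteq> bot" by (simp add: trivial_limit_within)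
    moreover have "((\<lambda>w. (dist ?J z + dist w ?J / 2) / tau) \<longlongrightarrow> (dist ?J z + dist ?J ?J / 2) / tau)
        (at ?J within Dom phi)"
      using tau_pos by (intro tendsto_intros) auto
    then have "(?g \<longlongrightarrow> ereal (dist ?J z / tau)) (at ?J within Dom phi)" by simp
    ultimately have "Limsup (at ?J within Dom phi) ?g = ereal (dist ?J z / tau)"
      by (intro lim_imp_Limsup)
    moreover have "eventually (\<lambda>w. slope_quotient phi ?J w \<le> ?g w) (at ?J within Dom phi)"
      unfolding eventually_at using slope_quotient_at_resolvent_le by (intro exI[of _ 1]) auto
    then have "Limsup (at ?J within Dom phi) (slope_quotient phi ?J) \<le> Limsup (at ?J within Dom phi) ?g"
      by (rule Limsup_mono)
    ultimately show ?thesis using slope_eq_Limsup[OF J_Dom True] by simp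
  qed
qed

text \<open>Moving from \<open>z\<close> a fraction \<open>k\<close> of the way towards \<open>J\<^sub>\<tau> z\<close> along the curves of (A2),
  the value gap at the saddle point makes the cross difference of \<open>\<phi>\<close> grow like
  \<open>(1/\<tau> + \<lambda>) k d\<^sup>2\<close>, while the displacement is at most \<open>k d\<close>, \<open>d = d(J\<^sub>\<tau> z, z)\<close>.\<close>

lemma interpolant_towards_resolvent:
  assumes z: "z \<in> Dom phi" and k: "0 \<le> k" "k \<le> 1"
  shows "\<exists>w\<in>Dom phi. dist w z \<le> k * dist (J phi tau z) z \<and>
           (1/tau + lam) * (dist (J phi tau z) z)^2 * k * (1 - k/2)
             \<le> real_of_ereal (phi (fst z) (snd w)) - real_of_ereal (phi (fst w) (snd z))"
proof -
  obtain xb yb where z_eq: "z = (xb, yb)" by fastforce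
  obtain a b where ab: "J phi tau z = (a, b)" by fastforce
  let ?F = "Phi_real phi tau xb yb"
  define mu where "mu = 1/tau + lam"
  define d where "d = dist (J phi tau z) z"
  have tau_pos: "0 < tau" by (rule admissible_tau_pos[OF tau])
  have xb: "xb \<in> DX phi" and yb: "yb \<in> DY phi" using z by (auto simp: z_eq Dom_def)
  have s: "saddle_on (DX phi) (DY phi) ?F (a, b)" using J_saddle_on[of z] unfolding ab by (simp add: z_eq)
  then have a: "a \<in> DX phi" and b: "b \<in> DY phi" by (simp_all add: saddle_on_def)
  have d2: "d^2 = (dist xb a)^2 + (dist yb b)^2" unfolding d_def ab by (simp add: z_eq dist_Pair_Pair dist_commute)
  have gap: "mu/2 * d^2 \<le> ?F xb b - ?F a yb"
    using saddle_on_value_gap[OF Phi_real_convex[OF b] Phi_real_concave[OF a] s xb yb]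
    by (simp add: mu_def d2 dist_commute)
  obtain g s' where g: "g \<in> DX phi" and s': "s' \<in> DY phi"
    and dg: "dist g xb \<le> k * dist xb a" and ds: "dist s' yb \<le> k * dist yb b"
    and cx: "?F g yb \<le> (1-k) * ?F xb yb + k * ?F a yb - mu/2 * k * (1-k) * (dist xb a)^2"
    and cy: "(1-k) * ?F xb yb + k * ?F xb b + mu/2 * k * (1-k) * (dist yb b)^2 \<le> ?F xb s'"
    using A2_interpolants_from[OF xb a yb b, of k] k xb yb unfolding mu_def by auto
  have "real_of_ereal (phi g yb) \<le> ?F g yb" "?F xb s' \<le> real_of_ereal (phi xb s')"
    using tau_pos by (simp_all add: Phi_real_def)
  moreover have "k * (mu/2 * d^2) \<le> k * (?F xb b - ?F a yb)" using gap k by (intro mult_left_mono) auto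
  moreover have "mu/2 * k * (1-k) * (dist xb a)^2 + mu/2 * k * (1-k) * (dist yb b)^2 = mu/2 * k * (1-k) * d^2"
    by (simp add: d2 algebra_simps)
  moreover have "k * (mu/2 * d^2) + mu/2 * k * (1-k) * d^2 = mu * d^2 * k * (1 - k/2)"
    by (simp add: field_simps power2_eq_square)
  moreover have "k * (?F xb b - ?F a yb) = k * ?F xb b - k * ?F a yb" by (simp add: algebra_simps)
  ultimately have "mu * d^2 * k * (1 - k/2) \<le> real_of_ereal (phi xb s') - real_of_ereal (phi g yb)"
    using cx cy by linarith
  moreover have "dist (g, s') z \<le> k * d"
    using dist_Pair_le_scaled[OF dg ds k(1)] unfolding d_def ab by (simp add: z_eq dist_commute)
  moreover have "(g, s') \<in> Dom phi" using g s' by (simp add: Dom_def)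
  ultimately show ?thesis unfolding mu_def d_def by (intro bexI[of _ "(g, s')"]) (simp_all add: z_eq)
qed

lemma slope_quotient_towards_resolvent:
  assumes z: "z \<in> Dom phi" and d: "0 < dist (J phi tau z) z" and k: "0 < k" "k \<le> 1"
  shows "\<exists>w\<in>Dom phi. w \<noteq> z \<and> dist w z \<le> k * dist (J phi tau z) z \<and>
           ereal ((1/tau + lam) * dist (J phi tau z) z * (1 - k/2)) \<le> slope_quotient phi z w"
proof -
  define mu where "mu = 1/tau + lam"
  define d where "d = dist (J phi tau z) z"
  have mu: "0 < mu" unfolding mu_def by (rule admissible_tau_modulus_pos[OF tau])
  obtain w where w: "w \<in> Dom phi" "dist w z \<le> k * d"
    and gain: "mu * d^2 * k * (1 - k/2) \<le> real_of_ereal (phi (fst z) (snd w)) - real_of_ereal (phi (fst w) (snd z))"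
    (is "_ \<le> ?diff")
    using interpolant_towards_resolvent[OF z _ k(2)] k(1) unfolding mu_def d_def by auto
  have pos: "0 < mu * d^2 * k * (1 - k/2)" using mu d k by (simp add: d_def)
  have w_ne: "w \<noteq> z" using gain pos by auto
  then have w_pos: "0 < dist w z" by simp
  have "mu * d * (1 - k/2) = (mu * d^2 * k * (1 - k/2)) / (k * d)"
    using k d by (simp add: d_def field_simps power2_eq_square)
  also have "\<dots> \<le> ?diff / (k * d)" using gain k d by (intro divide_right_mono) (auto simp: d_def)
  also have "\<dots> \<le> ?diff / dist w z"
  proof (rule divide_left_mono[OF w(2)])
    show "0 \<le> ?diff" using gain pos by linarith
    show "0 < k * d * dist w z" using k d w_pos by (simp add: d_def)
  qed
  finally have "mu * d * (1 - k/2) \<le> max ?diff 0 / dist w z" using gain pos by simp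
  then show ?thesis
    using slope_quotient_eq_real[OF z w(1) w_ne] w w_ne unfolding mu_def d_def by auto
qed

lemma resolvent_dist_le_slope: "ereal ((1/tau + lam) * dist (J phi tau z) z) \<le> slope phi z"
proof -
  define mu where "mu = 1/tau + lam"
  define d where "d = dist (J phi tau z) z"
  have mu: "0 < mu" unfolding mu_def by (rule admissible_tau_modulus_pos[OF tau])
  consider "z \<notin> Dom phi" | "d = 0" | "z \<in> Dom phi" "0 < d" by (fastforce simp: d_def)
  then show ?thesis
  proof cases
    case 1
    then show ?thesis by (simp add: slope_def)
  next
    case 2
    then show ?thesis using slope_nonneg[of phi z] by (simp add: d_def zero_ereal_def)
  next
    case 3
    have approx: "\<exists>w\<in>Dom phi. w \<noteq> z \<and> dist w z < e \<and> ereal (mu * d - e) \<le> slope_quotient phi z w"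
      if "e > 0" for e
    proof -
      define k where "k = min 1 (min (e / (2*d)) (e / (mu*d)))"
      have k: "0 < k" "k \<le> 1" using that 3 mu by (auto simp: k_def)
      have "k * d \<le> e / (2*d) * d" using 3 by (intro mult_right_mono) (auto simp: k_def)
      then have kd: "k * d < e" using 3 that by simp
      have "k * (mu * d) \<le> e / (mu * d) * (mu * d)" using 3 mu by (intro mult_right_mono) (auto simp: k_def)
      then have "mu * d - e \<le> mu * d * (1 - k/2)" using 3 mu that by (simp add: algebra_simps)
      then have le: "ereal (mu * d - e) \<le> ereal (mu * d * (1 - k/2))" by simp
      obtain w where w: "w \<in> Dom phi" "w \<noteq> z" "dist w z \<le> k * d"
        and quotient: "ereal (mu * d * (1 - k/2)) \<le> slope_quotient phi z w"
        using slope_quotient_towards_resolvent[OF 3(1) _ k] 3(2) unfolding d_def mu_def by blast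
      from le quotient have "ereal (mu * d - e) \<le> slope_quotient phi z w" by (rule order_trans)
      then show ?thesis using w kd by (intro bexI[of _ w]) auto
    qed
    then have "z islimpt Dom phi" unfolding islimpt_approachable by blast
    then have "slope phi z = Limsup (at z within Dom phi) (slope_quotient phi z)"
      using 3(1) by (simp add: slope_eq_Limsup)
    moreover have "ereal (mu * d) \<le> Limsup (at z within Dom phi) (slope_quotient phi z)"
      by (rule Limsup_within_ge_of_approx[OF approx])
    ultimately show ?thesis by (simp add: mu_def d_def)
  qed
qed

end

theorem mainTheorem12:
  fixes phi :: "'x::complete_space \<Rightarrow> 'y::complete_space \<Rightarrow> ereal"
    and lam tau :: real and z :: "'x \<times> 'y"
  assumes "proper_fun phi" and "closed_fun phi" and "A1 phi" and "A2 phi lam"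
    and "admissible_tau lam tau"
  shows "slope phi (J phi tau z) \<le> ereal (dist (J phi tau z) z / tau) \<and>
         ereal (dist (J phi tau z) z / tau) \<le> ereal (1 / (1 + lam * tau)) * slope phi z \<and>
         J phi tau z \<in> dom_slope phi"
proof -
  interpret resolvent_setting phi lam tau by unfold_locales (rule assms)+
  have upper: "slope phi (J phi tau z) \<le> ereal (dist (J phi tau z) z / tau)"
    by (rule slope_resolvent_le)
  have pos: "0 < tau" "0 < 1 + lam * tau"
    using admissible_tau_pos[OF tau] admissible_tau_one_plus_pos[OF tau] by auto
  have "1/tau + lam = (1 + lam * tau) / tau" using pos by (simp add: field_simps)
  moreover have "1 / c * (c / tau * d) = d / tau" if "c \<noteq> 0" for c d using that by simp
  ultimately have "ereal (dist (J phi tau z) z / tau)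
      = ereal (1 / (1 + lam * tau)) * ereal ((1/tau + lam) * dist (J phi tau z) z)"
    using pos by simp
  also have "\<dots> \<le> ereal (1 / (1 + lam * tau)) * slope phi z"
    using pos by (intro ereal_mult_left_mono resolvent_dist_le_slope) auto
  finally have lower: "ereal (dist (J phi tau z) z / tau) \<le> ereal (1 / (1 + lam * tau)) * slope phi z" .
  have "J phi tau z \<in> Dom phi"
    using J_saddle_on[of z] by (simp add: saddle_on_def Dom_def mem_Times_iff)
  with upper have "J phi tau z \<in> dom_slope phi"
    by (auto simp: dom_slope_def intro: le_less_trans)
  with upper lower show ?thesis by blast
qed

end
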